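(* Let $\phi:[0,1]\to\mathbb{C}$ be continuous with $\phi(0)=\phi(1)=1$ and $\hat\phi\in\ell^1(\mathbb{Z})$. Let $m,\mathfrak{m}\in\mathbb{N}$, $N\ge\mathfrak{m}$, $\mu(k)=\sum_{l\in k-B_N}\hat\phi(l)$, $\nu(k)=\sum_{l\notin k-B_N}\hat\phi(l)$, and for $\mathfrak{m}$-Fourier bandlimited $f\in L^2([0,1];\mathbb{C}^m)$ let $\mathcal{R}_\phi f(x)=\sum_{j=0}^{2N-1}f(j/2N)s_N(x-j/2N)\phi(x-j/2N)$ (arguments modulo $1$). Then $$\overline{\varepsilon}_1\|f\|_{L^2([0,1];\mathbb{C}^m)}\le\|f-\mathcal{R}_\phi f\|_{L^2([0,1];\mathbb{C}^m)}\le\overline{\varepsilon}_2\|f\|_{L^2([0,1];\mathbb{C}^m)},$$ where $$\overline{\varepsilon}_1=\min_{k\in B_{\mathfrak{m}}}\Big\{|\nu(k)|^2+\sum_{l\in\mathbb{Z}\setminus\{0\}}|\mu(k+2lN)|^2\Big\}^{1/2},\quad \overline{\varepsilon}_2=\max_{k\in B_{\mathfrak{m}}}\Big\{|\nu(k)|^2+\sum_{l\in\mathbb{Z}\setminus\{0\}}|\mu(k+2lN)|^2\Big\}^{1/2}.$$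
   Context: $B_N=\{-N,\dots,N-1\}$, $k-B_N=\{k-b:b\in B_N\}$. $\hat g(k)=\int_0^1 g(x)e^{-i2\pi kx}dx$. $f$ is $\mathfrak{m}$-Fourier bandlimited if $\hat f(k)=0$ for $k\notin B_{\mathfrak{m}}$ (identified with its continuous $1$-periodic representative). $s_N(x)=\frac1{2N}\sum_{k=-N}^{N-1}e^{i2\pi kx}$. *)

theory Defs
  imports "HOL-Analysis.Analysis"
begin

definition BN :: "nat \<Rightarrow> int set" where
  "BN N = {- int N .. int N - 1}"

definition fcoef :: "(real \<Rightarrow> complex) \<Rightarrow> int \<Rightarrow> complex" where
  "fcoef g k = integral {0..1} (\<lambda>x. g x * exp (- (\<i> * 2 * complex_of_real pi * of_int k * complex_of_real x)))"

definition vfcoef :: "(real \<Rightarrow> complex ^ 'm) \<Rightarrow> int \<Rightarrow> complex ^ 'm" where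
  "vfcoef f k = (\<chi> i. fcoef (\<lambda>x. f x $ i) k)"

text \<open>f is mm-Fourier bandlimited, identified with its continuous 1-periodic representative.\<close>
definition bandlimited :: "nat \<Rightarrow> (real \<Rightarrow> complex ^ 'm) \<Rightarrow> bool" where
  "bandlimited mm f \<longleftrightarrow> continuous_on UNIV f \<and> (\<forall>x. f (x + 1) = f x)
      \<and> (\<forall>k. k \<notin> BN mm \<longrightarrow> vfcoef f k = 0)"

definition L2norm :: "(real \<Rightarrow> complex ^ 'm) \<Rightarrow> real" where
  "L2norm f = sqrt (integral {0..1} (\<lambda>x. (norm (f x))\<^sup>2))"

definition sN :: "nat \<Rightarrow> real \<Rightarrow> complex" where
  "sN N x = (1 / (2 * of_nat N)) *
     (\<Sum>k\<in>BN N. exp (\<i> * 2 * complex_of_real pi * of_int k * complex_of_real x))"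

definition cscale :: "complex \<Rightarrow> complex ^ 'm \<Rightarrow> complex ^ 'm" where
  "cscale c v = (\<chi> i. c * v $ i)"

definition Rphi :: "nat \<Rightarrow> (real \<Rightarrow> complex) \<Rightarrow> (real \<Rightarrow> complex ^ 'm) \<Rightarrow> real \<Rightarrow> complex ^ 'm" where
  "Rphi N \<phi> f x = (\<Sum>j<2 * N.
      cscale (sN N (x - real j / (2 * real N)) * \<phi> (frac (x - real j / (2 * real N))))
             (f (real j / (2 * real N))))"

definition mu :: "nat \<Rightarrow> (real \<Rightarrow> complex) \<Rightarrow> int \<Rightarrow> complex" where
  "mu N \<phi> k = (\<Sum>l\<in>(\<lambda>b. k - b) ` BN N. fcoef \<phi> l)"

definition nu :: "nat \<Rightarrow> (real \<Rightarrow> complex) \<Rightarrow> int \<Rightarrow> complex" where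
  "nu N \<phi> k = infsum (fcoef \<phi>) (UNIV - (\<lambda>b. k - b) ` BN N)"

definition errterm :: "nat \<Rightarrow> (real \<Rightarrow> complex) \<Rightarrow> int \<Rightarrow> real" where
  "errterm N \<phi> k = sqrt ((cmod (nu N \<phi> k))\<^sup>2
      + infsum (\<lambda>l. (cmod (mu N \<phi> (k + 2 * l * int N)))\<^sup>2) (UNIV - {0}))"

definition eps1 :: "nat \<Rightarrow> nat \<Rightarrow> (real \<Rightarrow> complex) \<Rightarrow> real" where
  "eps1 mm N \<phi> = Min (errterm N \<phi> ` BN mm)"

definition eps2 :: "nat \<Rightarrow> nat \<Rightarrow> (real \<Rightarrow> complex) \<Rightarrow> real" where
  "eps2 mm N \<phi> = Max (errterm N \<phi> ` BN mm)"

end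

theory Submission
  imports Defs
begin

text \<open>Expand the bandlimited f as the sum of c_k e_k over k \<in> B_m, where e_k x = exp(2 \<pi> i k x).
  The reconstruction only sees the samples f(j/2N), hence f - R f is the sum of c_k (e_k - R e_k).
  The translation rule for Fourier coefficients and the discrete orthogonality of the characters
  on the grid j/2N show that the n-th coefficient of e_k - R e_k is [n = k] - \<mu>(n) [n \<equiv> k mod 2N].
  Since 2N \<ge> 2m, these coefficient sequences have disjoint supports for distinct k \<in> B_m, so by
  Parseval |f - R f|^2 is the sum of |c_k|^2 \<epsilon>(k)^2 while |f|^2 is the sum of |c_k|^2; the term
  l = 0 in \<epsilon>(k)^2 is |1 - \<mu>(k)|^2 = |\<nu>(k)|^2 by Fourier inversion at 0 (the coefficients of \<phi>,
  being absolutely summable, sum to \<phi>(0) = 1). The bounds follow by comparing the weights \<epsilon>(k)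
  with their minimum and maximum. Parseval's identity itself comes from the uniform density of
  trigonometric polynomials, obtained from Stone-Weierstrass on the unit circle.\<close>

section \<open>Characters and Fourier coefficients\<close>

definition fexp :: "int \<Rightarrow> real \<Rightarrow> complex" where
  "fexp k x = exp (\<i> * 2 * complex_of_real pi * of_int k * complex_of_real x)"

lemma fexp_add_index: "fexp (k + j) x = fexp k x * fexp j x"
  unfolding fexp_def by (simp add: exp_add[symmetric] algebra_simps)

lemma fexp_add: "fexp k (x + y) = fexp k x * fexp k y"
  unfolding fexp_def by (simp add: exp_add[symmetric] algebra_simps)

lemma fexp_0_index [simp]: "fexp 0 x = 1"
  by (simp add: fexp_def)

lemma fexp_at_0 [simp]: "fexp k 0 = 1"
  by (simp add: fexp_def)

lemma norm_fexp [simp]: "norm (fexp k x) = 1"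
  unfolding fexp_def by simp

lemma cnj_fexp: "cnj (fexp k x) = fexp (- k) x"
  unfolding fexp_def by (simp add: exp_cnj)

lemma fexp_mult_cnj: "fexp j x * cnj (fexp k x) = fexp (j - k) x"
  by (simp add: cnj_fexp fexp_add_index[symmetric])

lemma fexp_plus_1 [simp]: "fexp k (x + 1) = fexp k x"
proof -
  have "fexp k (x + 1) = exp (\<i> * 2 * complex_of_real pi * of_int k * complex_of_real x
      + \<i> * (of_int k * (of_real pi * 2)))"
    unfolding fexp_def by (simp add: algebra_simps)
  then show ?thesis
    unfolding fexp_def by (simp only: exp_plus_2pin)
qed

lemma fexp_at_1 [simp]: "fexp k 1 = 1"
  using fexp_plus_1[of k 0] by simp

lemma continuous_on_fexp [continuous_intros]: "continuous_on S (fexp k)"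
  unfolding fexp_def by (intro continuous_intros)

lemma has_integral_fexp: "(fexp k has_integral (if k = 0 then 1 else 0)) {0..1}"
proof (cases "k = 0")
  case True
  then have "fexp k = (\<lambda>x. 1)"
    by auto
  then show ?thesis
    using True has_integral_const_real[of "1::complex" 0 1] by simp
next
  case False
  define c where "c = \<i> * 2 * complex_of_real pi * of_int k"
  have "c \<noteq> 0"
    using False by (simp add: c_def)
  have "((\<lambda>x. fexp k x / c) has_vector_derivative fexp k x) (at x within {0..1})" for x
  proof -
    have "(fexp k has_vector_derivative c * fexp k x) (at x within {0..1})"
      unfolding fexp_def c_def
      by (rule has_vector_derivative_real_field) (auto intro!: derivative_eq_intros simp: algebra_simps)
    then show ?thesis
      using \<open>c \<noteq> 0\<close> by (auto intro!: derivative_eq_intros)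
  qed
  then have "(fexp k has_integral (fexp k 1 / c - fexp k 0 / c)) {0..1}"
    by (intro fundamental_theorem_of_calculus) auto
  then show ?thesis
    using False by simp
qed

lemma integral_fexp_mult_cnj:
  "integral {0..1} (\<lambda>x. fexp j x * cnj (fexp k x)) = (if j = k then 1 else 0)"
  using has_integral_fexp[of "j - k"] by (simp add: fexp_mult_cnj integral_unique)

lemma fcoef_conv_integral_cnj: "fcoef g k = integral {0..1} (\<lambda>x. g x * cnj (fexp k x))"
  unfolding fcoef_def fexp_def by (simp add: exp_cnj)

lemma fcoef_fexp: "fcoef (fexp j) k = (if k = j then 1 else 0)"
  unfolding fcoef_conv_integral_cnj integral_fexp_mult_cnj by auto

lemma fcoef_cmult: "fcoef (\<lambda>x. c * g x) k = c * fcoef g k"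
  unfolding fcoef_def by (simp add: mult.assoc)

lemma fcoef_diff:
  "continuous_on {0..1} g \<Longrightarrow> continuous_on {0..1} h \<Longrightarrow>
     fcoef (\<lambda>x. g x - h x) k = fcoef g k - fcoef h k"
  unfolding fcoef_conv_integral_cnj
  by (subst integral_diff[symmetric]) (auto intro!: integrable_continuous_interval continuous_intros simp: algebra_simps)

lemma fcoef_sum:
  "finite I \<Longrightarrow> (\<And>i. i \<in> I \<Longrightarrow> continuous_on {0..1} (g i)) \<Longrightarrow>
     fcoef (\<lambda>x. \<Sum>i\<in>I. g i x) k = (\<Sum>i\<in>I. fcoef (g i) k)"
  unfolding fcoef_conv_integral_cnj sum_distrib_right
  by (subst integral_sum) (auto intro!: integrable_continuous_interval continuous_intros)

lemma fcoef_cong: "(\<And>x. x \<in> {0..1} \<Longrightarrow> g x = h x) \<Longrightarrow> fcoef g k = fcoef h k"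
  unfolding fcoef_def by (rule integral_cong) auto

definition trig_sum :: "(int \<Rightarrow> complex) \<Rightarrow> int set \<Rightarrow> real \<Rightarrow> complex" where
  "trig_sum a K x = (\<Sum>j\<in>K. a j * fexp j x)"

lemma continuous_on_trig_sum [continuous_intros]: "continuous_on S (trig_sum a K)"
  unfolding trig_sum_def by (intro continuous_intros)

lemma fcoef_trig_sum:
  assumes "finite K"
  shows "fcoef (trig_sum a K) k = (if k \<in> K then a k else 0)"
proof -
  have "fcoef (trig_sum a K) k = (\<Sum>j\<in>K. a j * fcoef (fexp j) k)"
    unfolding trig_sum_def using assms
    by (subst fcoef_sum) (auto intro!: continuous_intros simp: fcoef_cmult)
  also have "\<dots> = (if k \<in> K then a k else 0)"
    using assms by (simp add: fcoef_fexp if_distrib[where f = "times _"] sum.delta cong: if_cong)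
  finally show ?thesis .
qed

lemma integral_mult_cnj_trig_sum:
  assumes "continuous_on {0..1} g" "finite K"
  shows "integral {0..1} (\<lambda>x. g x * cnj (trig_sum a K x)) = (\<Sum>j\<in>K. cnj (a j) * fcoef g j)"
proof -
  have "integral {0..1} (\<lambda>x. g x * cnj (trig_sum a K x))
      = integral {0..1} (\<lambda>x. \<Sum>j\<in>K. cnj (a j) * (g x * cnj (fexp j x)))"
    unfolding trig_sum_def by (simp add: sum_distrib_left mult_ac)
  also have "\<dots> = (\<Sum>j\<in>K. cnj (a j) * fcoef g j)"
    unfolding fcoef_conv_integral_cnj
    by (subst integral_sum) (auto intro!: integrable_continuous_interval continuous_intros assms)
  finally show ?thesis .
qed

lemma of_real_integral_norm_sq:
  fixes g :: "real \<Rightarrow> complex"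
  assumes "continuous_on {0..1} g"
  shows "complex_of_real (integral {0..1} (\<lambda>x. (cmod (g x))\<^sup>2))
    = integral {0..1} (\<lambda>x. g x * cnj (g x))"
proof -
  have "(\<lambda>x. (cmod (g x))\<^sup>2) integrable_on {0..1}"
    by (auto intro!: integrable_continuous_interval continuous_intros assms)
  then have "((\<lambda>x. complex_of_real ((cmod (g x))\<^sup>2)) has_integral
      complex_of_real (integral {0..1} (\<lambda>x. (cmod (g x))\<^sup>2))) {0..1}"
    by (intro has_integral_of_real integrable_integral)
  then show ?thesis
    unfolding complex_norm_square by (rule integral_unique[symmetric])
qed

lemma integral_norm_sq_diff_trig_sum:
  assumes h: "continuous_on {0..1} h" and K: "finite K"
  shows "integral {0..1} (\<lambda>x. (cmod (h x - trig_sum a K x))\<^sup>2)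
     = integral {0..1} (\<lambda>x. (cmod (h x))\<^sup>2) - (\<Sum>j\<in>K. (cmod (fcoef h j))\<^sup>2)
       + (\<Sum>j\<in>K. (cmod (a j - fcoef h j))\<^sup>2)"
proof -
  let ?q = "trig_sum a K" and ?F = "fcoef h"
  have hq: "integral {0..1} (\<lambda>x. h x * cnj (?q x)) = (\<Sum>j\<in>K. cnj (a j) * ?F j)"
    by (rule integral_mult_cnj_trig_sum[OF h K])
  have qh: "integral {0..1} (\<lambda>x. ?q x * cnj (h x)) = (\<Sum>j\<in>K. a j * cnj (?F j))"
    using arg_cong[OF hq, of cnj] by (simp add: integral_cnj mult.commute)
  have qq: "integral {0..1} (\<lambda>x. ?q x * cnj (?q x)) = (\<Sum>j\<in>K. cnj (a j) * a j)"
    by (simp add: integral_mult_cnj_trig_sum K fcoef_trig_sum continuous_on_trig_sum)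
  have "complex_of_real (integral {0..1} (\<lambda>x. (cmod (h x - ?q x))\<^sup>2))
      = integral {0..1} (\<lambda>x. h x * cnj (h x) - h x * cnj (?q x) - ?q x * cnj (h x) + ?q x * cnj (?q x))"
    by (subst of_real_integral_norm_sq) (auto intro!: continuous_intros h simp: algebra_simps)
  also have "\<dots> = integral {0..1} (\<lambda>x. h x * cnj (h x))
      - (\<Sum>j\<in>K. cnj (a j) * ?F j) - (\<Sum>j\<in>K. a j * cnj (?F j)) + (\<Sum>j\<in>K. cnj (a j) * a j)"
    by (subst integral_add integral_diff, (auto intro!: integrable_continuous_interval continuous_intros h)[2])+
       (simp add: hq qh qq)
  also have "\<dots> = integral {0..1} (\<lambda>x. h x * cnj (h x))
      + (\<Sum>j\<in>K. (a j - ?F j) * cnj (a j - ?F j) - ?F j * cnj (?F j))"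
    by (simp add: sum_subtractf[symmetric] sum.distrib[symmetric] algebra_simps)
  also have "\<dots> = complex_of_real (integral {0..1} (\<lambda>x. (cmod (h x))\<^sup>2)
      - (\<Sum>j\<in>K. (cmod (?F j))\<^sup>2) + (\<Sum>j\<in>K. (cmod (a j - ?F j))\<^sup>2))"
    by (simp only: of_real_integral_norm_sq[OF h] of_real_add of_real_diff of_real_sum
        complex_norm_square sum_subtractf) simp
  finally show ?thesis
    by (simp only: of_real_eq_iff)
qed

lemma bessel_inequality:
  assumes h: "continuous_on {0..1} h" and K: "finite K"
  shows "(\<Sum>j\<in>K. (cmod (fcoef h j))\<^sup>2) \<le> integral {0..1} (\<lambda>x. (cmod (h x))\<^sup>2)"
proof -
  have "0 \<le> integral {0..1} (\<lambda>x. (cmod (h x - trig_sum (fcoef h) K x))\<^sup>2)"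
    by (rule integral_nonneg) (auto intro!: integrable_continuous_interval continuous_intros h)
  then show ?thesis
    unfolding integral_norm_sq_diff_trig_sum[OF h K] by simp
qed

section \<open>Density of trigonometric polynomials\<close>

definition trig_poly :: "(real \<Rightarrow> complex) \<Rightarrow> bool" where
  "trig_poly q \<longleftrightarrow> (\<exists>a K. finite K \<and> q = trig_sum a K)"

lemma trig_sum_extend:
  assumes "finite K'" "K \<subseteq> K'"
  shows "trig_sum a K = trig_sum (\<lambda>j. if j \<in> K then a j else 0) K'"
proof
  fix x
  have "trig_sum (\<lambda>j. if j \<in> K then a j else 0) K' x
      = (\<Sum>j\<in>K'. if j \<in> K then a j * fexp j x else 0)"
    unfolding trig_sum_def by (rule sum.cong) auto
  also have "\<dots> = trig_sum a K x"
    using assms by (simp add: sum.inter_restrict[symmetric] trig_sum_def Int_absorb1)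
  finally show "trig_sum a K x = trig_sum (\<lambda>j. if j \<in> K then a j else 0) K' x" ..
qed

lemma trig_poly_cmult_fexp: "trig_poly (\<lambda>x. c * fexp k x)"
  unfolding trig_poly_def trig_sum_def by (intro exI[of _ "\<lambda>_. c"] exI[of _ "{k}"]) auto

lemma trig_poly_const: "trig_poly (\<lambda>x. c)"
  using trig_poly_cmult_fexp[of c 0] by simp

lemma trig_poly_add:
  assumes "trig_poly f" "trig_poly g"
  shows "trig_poly (\<lambda>x. f x + g x)"
proof -
  obtain a K b L where "finite K" "f = trig_sum a K" "finite L" "g = trig_sum b L"
    using assms unfolding trig_poly_def by blast
  then have "f = trig_sum (\<lambda>j. if j \<in> K then a j else 0) (K \<union> L)"
    "g = trig_sum (\<lambda>j. if j \<in> L then b j else 0) (K \<union> L)"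
    by (auto intro: trig_sum_extend)
  then have "(\<lambda>x. f x + g x)
      = trig_sum (\<lambda>j. (if j \<in> K then a j else 0) + (if j \<in> L then b j else 0)) (K \<union> L)"
    by (auto simp: trig_sum_def distrib_right sum.distrib)
  then show ?thesis
    using \<open>finite K\<close> \<open>finite L\<close> unfolding trig_poly_def by blast
qed

lemma trig_poly_sum:
  "finite I \<Longrightarrow> (\<And>i. i \<in> I \<Longrightarrow> trig_poly (f i)) \<Longrightarrow> trig_poly (\<lambda>x. \<Sum>i\<in>I. f i x)"
  by (induction I rule: finite_induct) (auto intro: trig_poly_const trig_poly_add)

lemma trig_poly_mult:
  assumes "trig_poly f" "trig_poly g"
  shows "trig_poly (\<lambda>x. f x * g x)"
proof -
  obtain a K b L where "finite K" "f = trig_sum a K" "finite L" "g = trig_sum b L"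
    using assms unfolding trig_poly_def by blast
  then have "(\<lambda>x. f x * g x) = (\<lambda>x. \<Sum>j\<in>K. \<Sum>i\<in>L. a j * b i * fexp (j + i) x)"
    by (auto simp: trig_sum_def sum_product fexp_add_index mult_ac)
  moreover have "trig_poly (\<lambda>x. \<Sum>j\<in>K. \<Sum>i\<in>L. a j * b i * fexp (j + i) x)"
    by (intro trig_poly_sum trig_poly_cmult_fexp \<open>finite K\<close> \<open>finite L\<close>)
  ultimately show ?thesis
    by simp
qed

lemma trig_poly_Re_fexp: "trig_poly (\<lambda>x. complex_of_real (Re (fexp 1 x)))"
proof -
  have "(\<lambda>x. complex_of_real (Re (fexp 1 x))) = (\<lambda>x. 1/2 * fexp 1 x + 1/2 * fexp (- 1) x)"
    by (auto simp: complex_eq_iff cnj_fexp[symmetric])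
  then show ?thesis
    by (simp only:) (intro trig_poly_add trig_poly_cmult_fexp)
qed

lemma trig_poly_Im_fexp: "trig_poly (\<lambda>x. complex_of_real (Im (fexp 1 x)))"
proof -
  have "(\<lambda>x. complex_of_real (Im (fexp 1 x))) = (\<lambda>x. - \<i>/2 * fexp 1 x + \<i>/2 * fexp (- 1) x)"
    by (auto simp: complex_eq_iff cnj_fexp[symmetric])
  then show ?thesis
    by (simp only:) (intro trig_poly_add trig_poly_cmult_fexp)
qed

lemma trig_poly_real_polynomial_function:
  fixes r :: "complex \<Rightarrow> real"
  assumes "real_polynomial_function r"
  shows "trig_poly (\<lambda>x. complex_of_real (r (fexp 1 x)))"
  using assms
proof (induction r rule: real_polynomial_function.induct)
  case (linear r)
  then interpret bounded_linear r .
  have linear_expansion: "r z = Re z * r 1 + Im z * r \<i>" for z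
  proof -
    have "r z = r (Re z *\<^sub>R 1 + Im z *\<^sub>R \<i>)"
      by (rule arg_cong[where f = r]) (simp add: complex_eq_iff)
    also have "\<dots> = Re z * r 1 + Im z * r \<i>"
      by (simp add: add scale)
    finally show ?thesis .
  qed
  have "(\<lambda>x. complex_of_real (r (fexp 1 x))) = (\<lambda>x.
      complex_of_real (Re (fexp 1 x)) * r 1 + complex_of_real (Im (fexp 1 x)) * r \<i>)"
    by (intro ext) (simp only: linear_expansion[of "fexp 1 _"] of_real_add of_real_mult)
  then show ?case
    by (simp add: trig_poly_add trig_poly_mult trig_poly_Re_fexp trig_poly_Im_fexp trig_poly_const)
next
  case (const c)
  then show ?case
    by (rule trig_poly_const)
next
  case (add f g)
  then show ?case
    by (simp add: trig_poly_add)
next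
  case (mult f g)
  then show ?case
    by (simp add: trig_poly_mult)
qed

lemma trig_poly_polynomial_function:
  fixes p :: "complex \<Rightarrow> complex"
  assumes "polynomial_function p"
  shows "trig_poly (\<lambda>x. p (fexp 1 x))"
proof -
  have "real_polynomial_function (Re \<circ> p)" "real_polynomial_function (Im \<circ> p)"
    using assms unfolding polynomial_function_def by (auto intro: bounded_linear_Re bounded_linear_Im)
  then have "trig_poly
      (\<lambda>x. complex_of_real (Re (p (fexp 1 x))) + complex_of_real (Im (p (fexp 1 x))) * \<i>)"
    by (intro trig_poly_add trig_poly_mult trig_poly_const) (auto dest: trig_poly_real_polynomial_function)
  moreover have "(\<lambda>x. complex_of_real (Re (p (fexp 1 x))) + complex_of_real (Im (p (fexp 1 x))) * \<i>)
      = (\<lambda>x. p (fexp 1 x))"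
    by (intro ext) (simp add: complex_eq_iff)
  ultimately show ?thesis
    by metis
qed

lemma fexp_1_eq_cis: "fexp 1 x = cis (2 * pi * x)"
  by (simp add: fexp_def cis_conv_exp mult_ac)

text \<open>On each closed half of the unit circle the angle of z is recovered from Re z by arccos;
  the two branches agree at z = 1 and z = -1 because h 0 = h 1.\<close>
lemma periodic_lift_to_circle:
  fixes h :: "real \<Rightarrow> complex"
  assumes h: "continuous_on {0..1} h" and h01: "h 0 = h 1"
  obtains G where "continuous_on (sphere 0 1) G" "\<And>x. x \<in> {0..1} \<Longrightarrow> G (fexp 1 x) = h x"
proof
  define S :: "complex set" where "S = sphere 0 1"
  define \<theta> where "\<theta> z = arccos (Re z) / (2 * pi)" for z
  define G where "G z = (if - Im z \<le> 0 then h (\<theta> z) else h (1 - \<theta> z))" for z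
  have Re_S: "-1 \<le> Re z \<and> Re z \<le> 1" if "z \<in> S" for z
    using that abs_Re_le_cmod[of z] by (auto simp: S_def)
  have \<theta>_01: "\<theta> z \<in> {0..1}" "1 - \<theta> z \<in> {0..1}" if "z \<in> S" for z
    using arccos_lbound[of "Re z"] arccos_ubound[of "Re z"] Re_S[OF that]
    by (auto simp: \<theta>_def field_simps)
  have cont_\<theta>: "continuous_on A \<theta>" if "A \<subseteq> S" for A
    unfolding \<theta>_def using that by (intro continuous_intros) (auto dest: Re_S)
  show "continuous_on (sphere 0 1) G"
    unfolding G_def S_def[symmetric]
  proof (rule continuous_on_cases_le)
    show "continuous_on {z \<in> S. - Im z \<le> 0} (\<lambda>z. h (\<theta> z))"
      by (rule continuous_on_compose2[OF h cont_\<theta>]) (use \<theta>_01 in auto)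
    show "continuous_on {z \<in> S. 0 \<le> - Im z} (\<lambda>z. h (1 - \<theta> z))"
      by (rule continuous_on_compose2[OF h continuous_on_diff[OF continuous_on_const cont_\<theta>]])
        (use \<theta>_01 in auto)
    show "continuous_on S (\<lambda>z. - Im z)"
      by (intro continuous_intros)
  next
    fix z assume "z \<in> S" "- Im z = 0"
    then have "Re z = 1 \<or> Re z = -1"
      by (auto simp: S_def cmod_def power2_eq_1_iff)
    then show "h (\<theta> z) = h (1 - \<theta> z)"
      using h01 by (auto simp: \<theta>_def)
  qed
  fix x :: real assume x: "x \<in> {0..1}"
  show "G (fexp 1 x) = h x"
  proof (cases "x \<le> 1/2 \<or> x = 1")
    case True
    then have "0 \<le> sin (2 * pi * x)"
      using x by (auto intro: sin_ge_zero)
    moreover have "arccos (cos (2 * pi * x)) = 2 * pi * x" if "x \<le> 1/2"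
      using x that by (intro arccos_cos) auto
    ultimately show ?thesis
      using True h01 by (auto simp: G_def fexp_1_eq_cis \<theta>_def)
  next
    case False
    have "arccos (cos (2 * pi * x)) = 2 * pi - 2 * pi * x"
      using x False arccos_cos[of "2 * pi - 2 * pi * x"] by simp
    then have "1 - \<theta> (fexp 1 x) = x"
      by (simp add: \<theta>_def fexp_1_eq_cis field_simps)
    moreover have "sin (2 * pi * x) < 0"
      using x False by (intro sin_lt_zero) auto
    ultimately show ?thesis
      by (simp add: G_def fexp_1_eq_cis)
  qed
qed

lemma trig_poly_uniform_approx:
  fixes h :: "real \<Rightarrow> complex"
  assumes h: "continuous_on {0..1} h" and h01: "h 0 = h 1" and e: "e > 0"
  obtains q where "trig_poly q" "\<And>x. x \<in> {0..1} \<Longrightarrow> cmod (h x - q x) < e"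
proof -
  obtain G where G: "continuous_on (sphere 0 1) G" "\<And>x. x \<in> {0..1} \<Longrightarrow> G (fexp 1 x) = h x"
    using periodic_lift_to_circle[OF h h01] by blast
  obtain p where p: "polynomial_function p" "\<And>z. z \<in> sphere 0 1 \<Longrightarrow> norm (G z - p z) < e"
    using Stone_Weierstrass_polynomial_function[OF compact_sphere G(1) e] by blast
  show ?thesis
  proof
    show "trig_poly (\<lambda>x. p (fexp 1 x))"
      by (rule trig_poly_polynomial_function[OF p(1)])
    show "cmod (h x - p (fexp 1 x)) < e" if "x \<in> {0..1}" for x
      using p(2)[of "fexp 1 x"] G(2)[OF that] by simp
  qed
qed

section \<open>Parseval's identity and Fourier inversion\<close>

theorem parseval:
  assumes h: "continuous_on {0..1} h" and h01: "h 0 = h 1"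
  shows "((\<lambda>k. (cmod (fcoef h k))\<^sup>2) has_sum integral {0..1} (\<lambda>x. (cmod (h x))\<^sup>2)) UNIV"
  unfolding has_sum_def tendsto_iff eventually_finite_subsets_at_top
proof (intro allI impI)
  fix e :: real assume "e > 0"
  then obtain q where "trig_poly q" and q: "\<And>x. x \<in> {0..1} \<Longrightarrow> cmod (h x - q x) < sqrt (e / 2)"
    using trig_poly_uniform_approx[OF h h01, of "sqrt (e / 2)"] by auto
  then obtain a K0 where K0: "finite K0" "q = trig_sum a K0"
    unfolding trig_poly_def by blast
  have "dist (\<Sum>k\<in>K. (cmod (fcoef h k))\<^sup>2) (integral {0..1} (\<lambda>x. (cmod (h x))\<^sup>2)) < e"
    if K: "finite K" "K0 \<subseteq> K" for K
  proof -
    define a' where "a' j = (if j \<in> K0 then a j else 0)" for j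
    have q_K: "q = trig_sum a' K"
      unfolding K0(2) a'_def using K by (rule trig_sum_extend)
    have "integral {0..1} (\<lambda>x. (cmod (h x - q x))\<^sup>2) \<le> integral {0..1} (\<lambda>x::real. e / 2)"
    proof (rule integral_le)
      fix x :: real assume "x \<in> {0..1}"
      then have "(cmod (h x - q x))\<^sup>2 \<le> (sqrt (e / 2))\<^sup>2"
        using q less_imp_le by (intro power_mono) auto
      then show "(cmod (h x - q x))\<^sup>2 \<le> e / 2"
        using \<open>e > 0\<close> by simp
    qed (auto simp: q_K intro!: integrable_continuous_interval continuous_intros h)
    then have "integral {0..1} (\<lambda>x. (cmod (h x))\<^sup>2) - (\<Sum>j\<in>K. (cmod (fcoef h j))\<^sup>2) \<le> e / 2"
      unfolding q_K integral_norm_sq_diff_trig_sum[OF h K(1)]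
      using sum_nonneg[of K "\<lambda>j. (cmod (a' j - fcoef h j))\<^sup>2"] by simp
    with bessel_inequality[OF h K(1)] \<open>e > 0\<close> show ?thesis
      by (simp add: dist_real_def)
  qed
  then show "\<exists>X. finite X \<and> X \<subseteq> UNIV \<and> (\<forall>Y. finite Y \<and> X \<subseteq> Y \<and> Y \<subseteq> UNIV \<longrightarrow>
      dist (\<Sum>k\<in>Y. (cmod (fcoef h k))\<^sup>2) (integral {0..1} (\<lambda>x. (cmod (h x))\<^sup>2)) < e)"
    using K0(1) by blast
qed

lemma fcoef_eq_0_imp_eq_0:
  assumes h: "continuous_on {0..1} h" and h01: "h 0 = h 1" and "\<And>k. fcoef h k = 0"
    and x: "x \<in> {0..1}"
  shows "h x = 0"
proof -
  have "integral {0..1} (\<lambda>x. (cmod (h x))\<^sup>2) = 0"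
    using has_sum_unique[OF parseval[OF h h01] has_sum_0] assms(3) by simp
  then have "\<forall>x\<in>{0..1}. (cmod (h x))\<^sup>2 = 0"
    by (subst (asm) integral_eq_0_iff) (auto intro!: continuous_intros h)
  then show ?thesis
    using x by simp
qed

lemma eq_trig_sum_fcoef:
  assumes h: "continuous_on {0..1} h" and h01: "h 0 = h 1"
    and K: "finite K" and vanish: "\<And>k. k \<notin> K \<Longrightarrow> fcoef h k = 0" and x: "x \<in> {0..1}"
  shows "h x = trig_sum (fcoef h) K x"
proof -
  have "h x - trig_sum (fcoef h) K x = 0"
  proof (rule fcoef_eq_0_imp_eq_0[where h = "\<lambda>x. h x - trig_sum (fcoef h) K x", OF _ _ _ x])
    show "continuous_on {0..1} (\<lambda>x. h x - trig_sum (fcoef h) K x)"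
      by (intro continuous_intros h)
    show "h 0 - trig_sum (fcoef h) K 0 = h 1 - trig_sum (fcoef h) K 1"
      using h01 by (simp add: trig_sum_def)
    show "fcoef (\<lambda>x. h x - trig_sum (fcoef h) K x) k = 0" for k
      using vanish[of k] by (simp add: fcoef_diff h continuous_on_trig_sum fcoef_trig_sum K)
  qed
  then show ?thesis
    by simp
qed

lemma uniform_limit_trig_series:
  assumes "(\<lambda>j. norm (F j)) summable_on UNIV"
  shows "uniform_limit S (\<lambda>K x. trig_sum F K x) (\<lambda>x. \<Sum>\<^sub>\<infinity>j. F j * fexp j x)
    (finite_subsets_at_top UNIV)"
  unfolding trig_sum_def using assms by (intro Weierstrass_m_test_general) (auto simp: norm_mult)

lemma continuous_on_trig_series:
  assumes "(\<lambda>j. norm (F j)) summable_on UNIV"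
  shows "continuous_on S (\<lambda>x. \<Sum>\<^sub>\<infinity>j. F j * fexp j x)"
  by (rule uniform_limit_theorem[OF _ uniform_limit_trig_series[OF assms]])
    (auto intro: continuous_on_trig_sum finite_subsets_at_top_neq_bot)

lemma fcoef_trig_series:
  assumes F: "(\<lambda>j. norm (F j)) summable_on UNIV"
  shows "fcoef (\<lambda>x. \<Sum>\<^sub>\<infinity>j. F j * fexp j x) k = F k"
proof -
  have "uniform_limit {0..1} (\<lambda>K x. trig_sum F K x * cnj (fexp k x))
      (\<lambda>x. (\<Sum>\<^sub>\<infinity>j. F j * fexp j x) * cnj (fexp k x)) (finite_subsets_at_top UNIV)"
    unfolding trig_sum_def sum_distrib_right infsum_cmult_left'[symmetric]
    using F by (intro Weierstrass_m_test_general) (auto simp: norm_mult)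
  then obtain I J where I: "\<And>K. ((\<lambda>x. trig_sum F K x * cnj (fexp k x)) has_integral I K) {0..1}"
    and J: "((\<lambda>x. (\<Sum>\<^sub>\<infinity>j. F j * fexp j x) * cnj (fexp k x)) has_integral J) {0..1}"
    and lim: "(I \<longlongrightarrow> J) (finite_subsets_at_top UNIV)"
    by (rule uniform_limit_integral) (auto intro!: continuous_intros finite_subsets_at_top_neq_bot)
  have "\<forall>\<^sub>F K in finite_subsets_at_top UNIV. I K = F k"
    unfolding eventually_finite_subsets_at_top
  proof (intro exI[of _ "{k}"] conjI allI impI)
    fix K :: "int set" assume "finite K \<and> {k} \<subseteq> K \<and> K \<subseteq> UNIV"
    then show "I K = F k"
      using integral_unique[OF I[of K]] fcoef_trig_sum[of K F k]
      by (simp add: fcoef_conv_integral_cnj)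
  qed simp_all
  then have "(I \<longlongrightarrow> F k) (finite_subsets_at_top UNIV)"
    by (rule tendsto_eventually)
  then have "J = F k"
    using lim by (intro tendsto_unique[OF finite_subsets_at_top_neq_bot])
  then show ?thesis
    using J by (simp add: fcoef_conv_integral_cnj integral_unique)
qed

theorem fourier_series_eq:
  assumes h: "continuous_on {0..1} h" and h01: "h 0 = h 1"
    and summable: "(\<lambda>j. norm (fcoef h j)) summable_on UNIV" and x: "x \<in> {0..1}"
  shows "h x = (\<Sum>\<^sub>\<infinity>j. fcoef h j * fexp j x)"
proof -
  let ?g = "\<lambda>x. \<Sum>\<^sub>\<infinity>j. fcoef h j * fexp j x"
  have "h x - ?g x = 0"
  proof (rule fcoef_eq_0_imp_eq_0[where h = "\<lambda>x. h x - ?g x", OF _ _ _ x])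
    show "continuous_on {0..1} (\<lambda>x. h x - ?g x)"
      by (intro continuous_intros h continuous_on_trig_series summable)
    show "h 0 - ?g 0 = h 1 - ?g 1"
      using h01 by simp
    show "fcoef (\<lambda>x. h x - ?g x) k = 0" for k
      by (simp add: fcoef_diff h continuous_on_trig_series summable fcoef_trig_series)
  qed
  then show ?thesis
    by simp
qed

corollary infsum_fcoef_eq_value_at_0:
  assumes "continuous_on {0..1} h" "h 0 = h 1" "(\<lambda>j. norm (fcoef h j)) summable_on UNIV"
  shows "infsum (fcoef h) UNIV = h 0"
  using fourier_series_eq[OF assms, of 0] by simp

section \<open>Translates of periodic functions\<close>

lemma periodic_plus_of_int:
  assumes "\<And>y. G (y + 1) = G (y::real)"
  shows "G (y + of_int n) = G y"
proof (induction n arbitrary: y rule: int_induct[where k = 0])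
  case (step1 i)
  then show ?case
    using assms[of "y + of_int i"] by (simp add: add.assoc)
next
  case (step2 i)
  then show ?case
    using assms[of "y + of_int (i - 1)"] by (simp add: add.assoc)
qed simp

lemma integral_periodic_shift:
  fixes G :: "real \<Rightarrow> 'a::euclidean_space"
  assumes cont: "continuous_on UNIV G" and periodic: "\<And>y. G (y + 1) = G y"
  shows "integral {0..1} (\<lambda>x. G (x + c)) = integral {0..1} G"
proof -
  define d where "d = frac c"
  have d: "0 \<le> d" "d < 1"
    unfolding d_def by (auto simp: frac_lt_1)
  have integrable: "G integrable_on {a..b}" for a b
    by (rule integrable_continuous_interval, rule continuous_on_subset[OF cont]) auto
  have "G (x + c) = G (x + d)" for x
    using periodic_plus_of_int[of G, OF periodic, of "x + d" "\<lfloor>c\<rfloor>"]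
    unfolding d_def frac_def by (simp add: algebra_simps)
  then have "integral {0..1} (\<lambda>x. G (x + c)) = integral {d..1+d} G"
    using integral_shift_real_ivl[of d d "1 + d" G] by simp
  also have "\<dots> = integral {d..1} G + integral {1..1+d} G"
    using Henstock_Kurzweil_Integration.integral_combine[OF _ _ integrable, of d 1 "1 + d"] d by simp
  also have "integral {1..1+d} G = integral {0..d} G"
    using integral_shift_real_ivl[of 1 1 "1 + d" G] by (simp add: periodic)
  also have "integral {d..1} G + integral {0..d} G = integral {0..1} G"
    using Henstock_Kurzweil_Integration.integral_combine[OF _ _ integrable, of 0 d 1] d
    by (simp add: add.commute)
  finally show ?thesis .
qed

lemma fcoef_shift:
  assumes cont: "continuous_on UNIV g" and periodic: "\<And>y. g (y + 1) = g y"
  shows "fcoef (\<lambda>x. g (x - a)) k = cnj (fexp k a) * fcoef g k"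
proof -
  define G where "G y = g y * cnj (fexp k y)" for y
  have "continuous_on UNIV G"
    unfolding G_def by (intro continuous_intros cont)
  moreover have "G (y + 1) = G y" for y
    unfolding G_def by (simp add: periodic)
  ultimately have shift: "integral {0..1} (\<lambda>x. G (x + - a)) = integral {0..1} G"
    by (rule integral_periodic_shift)
  have "g (x - a) * cnj (fexp k x) = cnj (fexp k a) * G (x + - a)" for x
    using fexp_add[of k "x - a" a] by (simp add: G_def)
  then show ?thesis
    unfolding fcoef_conv_integral_cnj G_def[symmetric] shift[symmetric] by simp
qed

lemma fcoef_mult_fexp: "fcoef (\<lambda>x. g x * fexp b x) k = fcoef g (k - b)"
  unfolding fcoef_conv_integral_cnj by (simp add: mult.assoc cnj_fexp fexp_add_index[symmetric])

lemma sum_fexp_grid: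
  assumes M: "M > 0"
  shows "(\<Sum>j<M. fexp d (real j / real M)) = (if int M dvd d then of_nat M else 0)"
proof -
  define w where "w = fexp d (1 / real M)"
  have powers: "fexp d (real j / real M) = w ^ j" for j
    unfolding w_def fexp_def by (simp add: exp_of_nat_mult[symmetric] algebra_simps)
  have "w ^ M = 1"
    using powers[of M] M by simp
  moreover have "w = 1 \<longleftrightarrow> int M dvd d"
  proof
    assume "w = 1"
    then obtain m :: int where "2 * pi * real_of_int d / real M = real_of_int (2 * m) * pi"
      unfolding w_def fexp_def exp_eq_1 by (auto simp: field_simps)
    then have "real_of_int d = real_of_int (int M * m)"
      using M by (simp add: field_simps)
    then have "d = int M * m"
      by (simp only: of_int_eq_iff)
    then show "int M dvd d"
      by simp
  next
    assume "int M dvd d"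
    then obtain m where "d = int M * m" ..
    moreover have "\<i> * 2 * complex_of_real pi * of_int (int M * m) * complex_of_real (1 / real M)
        = \<i> * (of_int m * (of_real pi * 2))"
      using M by (simp add: field_simps)
    ultimately show "w = 1"
      unfolding w_def fexp_def by simp
  qed
  ultimately show ?thesis
    unfolding powers sum_gp_strict by auto
qed

lemma frac_comp_eq_on_interval:
  assumes "\<phi> 0 = \<phi> (1::real)" and "y \<in> {of_int n..of_int n + 1}"
  shows "\<phi> (frac y) = \<phi> (y - of_int n)"
proof (cases "y = of_int n + 1")
  case True
  then show ?thesis
    using assms(1) by (simp add: frac_def)
next
  case False
  then have "\<lfloor>y\<rfloor> = n"
    using assms(2) by (intro floor_unique) auto
  then show ?thesis
    by (simp add: frac_def)
qed

lemma continuous_on_frac_comp: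
  assumes cont: "continuous_on {0..1} \<phi>" and endpoints: "\<phi> 0 = \<phi> (1::real)"
  shows "continuous_on UNIV (\<lambda>y. \<phi> (frac y))"
proof (rule continuous_at_imp_continuous_on, rule ballI)
  fix y :: real
  have piece: "continuous_on {of_int n..of_int n + 1} (\<lambda>y. \<phi> (frac y))" for n :: int
  proof -
    have "continuous_on {of_int n..of_int n + 1} (\<lambda>y. \<phi> (y - of_int n))"
      by (rule continuous_on_compose2[OF cont]) (auto intro!: continuous_intros)
    then show ?thesis
      by (rule continuous_on_eq) (simp add: frac_comp_eq_on_interval[OF endpoints])
  qed
  define n where "n = \<lfloor>y\<rfloor>"
  have "continuous_on ({of_int (n - 1)..of_int (n - 1) + 1} \<union> {of_int n..of_int n + 1})
      (\<lambda>y. \<phi> (frac y))"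
    by (intro continuous_on_closed_Un piece) auto
  moreover have "{of_int (n - 1)..of_int (n - 1) + 1} \<union> {of_int n..of_int n + 1}
      = {of_int n - 1..of_int n + (1::real)}"
    by auto
  moreover have "y \<in> interior {of_int n - 1..of_int n + (1::real)}"
    unfolding n_def interior_atLeastAtMost_real by simp linarith
  ultimately show "isCont (\<lambda>y. \<phi> (frac y)) y"
    by (metis continuous_on_interior)
qed

section \<open>The reconstruction operator\<close>

lemma finite_BN [simp]: "finite (BN N)"
  unfolding BN_def by simp

lemma sN_eq_sum_fexp: "sN N y = 1 / (2 * of_nat N) * (\<Sum>b\<in>BN N. fexp b y)"
  unfolding sN_def fexp_def ..

lemma continuous_on_sN [continuous_intros]: "continuous_on S (sN N)"
  unfolding sN_eq_sum_fexp[abs_def] by (intro continuous_intros)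

lemma sN_plus_1: "sN N (y + 1) = sN N y"
  unfolding sN_eq_sum_fexp by simp

lemma mu_eq_sum: "mu N \<phi> k = (\<Sum>b\<in>BN N. fcoef \<phi> (k - b))"
  unfolding mu_def by (subst sum.reindex) (auto simp: inj_on_def)

lemma nu_eq_1_minus_mu:
  assumes "continuous_on {0..1} \<phi>" "\<phi> 0 = 1" "\<phi> 1 = 1" "(\<lambda>l. norm (fcoef \<phi> l)) summable_on UNIV"
  shows "nu N \<phi> k = 1 - mu N \<phi> k"
proof -
  define W where "W = (\<lambda>b. k - b) ` BN N"
  have "fcoef \<phi> summable_on UNIV"
    using assms(4) by (rule abs_summable_summable)
  then have "infsum (fcoef \<phi>) (W \<union> (UNIV - W)) = infsum (fcoef \<phi>) W + infsum (fcoef \<phi>) (UNIV - W)"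
    by (intro infsum_Un_disjoint) (auto intro: summable_on_subset_banach)
  moreover have "infsum (fcoef \<phi>) UNIV = 1"
    using infsum_fcoef_eq_value_at_0[of \<phi>] assms by simp
  moreover have "W \<union> (UNIV - W) = UNIV" "finite W"
    unfolding W_def by auto
  ultimately show ?thesis
    unfolding nu_def mu_def W_def[symmetric] by (simp add: eq_diff_eq add.commute)
qed

definition window_kernel :: "nat \<Rightarrow> (real \<Rightarrow> complex) \<Rightarrow> real \<Rightarrow> complex" where
  "window_kernel N \<phi> y = sN N y * \<phi> (frac y)"

definition node :: "nat \<Rightarrow> nat \<Rightarrow> real" where
  "node N j = real j / (2 * real N)"

definition recon :: "nat \<Rightarrow> (real \<Rightarrow> complex) \<Rightarrow> (real \<Rightarrow> complex) \<Rightarrow> real \<Rightarrow> complex" where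
  "recon N \<phi> u x = (\<Sum>j<2 * N. window_kernel N \<phi> (x - node N j) * u (node N j))"

definition alias_coef :: "nat \<Rightarrow> (real \<Rightarrow> complex) \<Rightarrow> int \<Rightarrow> int \<Rightarrow> complex" where
  "alias_coef N \<phi> k n = (if n = k then 1 else 0) - (if 2 * int N dvd k - n then mu N \<phi> n else 0)"

lemma Rphi_component: "Rphi N \<phi> f x $ i = recon N \<phi> (\<lambda>y. f y $ i) x"
  unfolding Rphi_def recon_def window_kernel_def node_def cscale_def by simp

lemma recon_cong_nodes:
  "(\<And>j. j < 2 * N \<Longrightarrow> u (node N j) = v (node N j)) \<Longrightarrow> recon N \<phi> u x = recon N \<phi> v x"
  unfolding recon_def by simp

lemma recon_sum: "recon N \<phi> (\<lambda>y. \<Sum>k\<in>K. c k * w k y) x = (\<Sum>k\<in>K. c k * recon N \<phi> (w k) x)"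
  unfolding recon_def sum_distrib_left by (subst sum.swap) (simp add: mult_ac)

lemma node_in_01: "j < 2 * N \<Longrightarrow> node N j \<in> {0..1}"
  unfolding node_def by (auto simp: field_simps)

context
  fixes N :: nat and \<phi> :: "real \<Rightarrow> complex"
  assumes N: "N > 0" and cont: "continuous_on {0..1} \<phi>" and endpoints: "\<phi> 0 = \<phi> 1"
begin

lemma continuous_on_window_kernel [continuous_intros]:
  assumes "continuous_on S g"
  shows "continuous_on S (\<lambda>x. window_kernel N \<phi> (g x))"
proof -
  have "continuous_on UNIV (window_kernel N \<phi>)"
    unfolding window_kernel_def[abs_def]
    by (intro continuous_intros continuous_on_frac_comp cont endpoints)
  then show ?thesis
    by (rule continuous_on_compose2[OF _ assms]) simp
qed

lemma window_kernel_plus_1: "window_kernel N \<phi> (y + 1) = window_kernel N \<phi> y"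
  unfolding window_kernel_def by (simp add: sN_plus_1 frac_1_eq)

lemma fcoef_window_kernel: "fcoef (window_kernel N \<phi>) k = mu N \<phi> k / (2 * of_nat N)"
proof -
  have "fcoef (window_kernel N \<phi>) k
      = fcoef (\<lambda>x. 1 / (2 * of_nat N) * (\<Sum>b\<in>BN N. \<phi> x * fexp b x)) k"
  proof (rule fcoef_cong)
    fix x :: real assume "x \<in> {0..1}"
    then have "\<phi> (frac x) = \<phi> x"
      using frac_comp_eq_on_interval[OF endpoints, of x 0] by simp
    then show "window_kernel N \<phi> x = 1 / (2 * of_nat N) * (\<Sum>b\<in>BN N. \<phi> x * fexp b x)"
      unfolding window_kernel_def sN_eq_sum_fexp
      by (simp add: sum_distrib_left sum_divide_distrib mult_ac)
  qed
  also have "\<dots> = mu N \<phi> k / (2 * of_nat N)"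
    unfolding fcoef_cmult by (simp add: fcoef_sum continuous_intros cont fcoef_mult_fexp mu_eq_sum)
  finally show ?thesis .
qed

lemma continuous_on_recon [continuous_intros]: "continuous_on S (recon N \<phi> u)"
  unfolding recon_def[abs_def] by (intro continuous_intros)

lemma recon_endpoints: "recon N \<phi> u 0 = recon N \<phi> u 1"
  unfolding recon_def using window_kernel_plus_1[of "- node N _"] by simp

lemma fcoef_recon_fexp:
  "fcoef (recon N \<phi> (fexp k)) n = (if 2 * int N dvd k - n then mu N \<phi> n else 0)"
proof -
  have "fcoef (recon N \<phi> (fexp k)) n
      = (\<Sum>j<2 * N. fexp k (node N j) * fcoef (\<lambda>x. window_kernel N \<phi> (x - node N j)) n)"
    unfolding recon_def[abs_def] by (simp add: fcoef_sum fcoef_cmult continuous_intros mult.commute)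
  also have "\<dots> = (\<Sum>j<2 * N. fexp (k - n) (node N j)) * (mu N \<phi> n / (2 * of_nat N))"
    unfolding sum_distrib_right
  proof (rule sum.cong)
    fix j
    have "continuous_on UNIV (window_kernel N \<phi>)"
      using continuous_on_window_kernel[OF continuous_on_id] by simp
    then show "fexp k (node N j) * fcoef (\<lambda>x. window_kernel N \<phi> (x - node N j)) n
        = fexp (k - n) (node N j) * (mu N \<phi> n / (2 * of_nat N))"
      by (simp add: fcoef_shift window_kernel_plus_1 fcoef_window_kernel cnj_fexp
          fexp_add_index[symmetric])
  qed simp
  also have "\<dots> = (if 2 * int N dvd k - n then mu N \<phi> n else 0)"
    using sum_fexp_grid[of "2 * N" "k - n"] N by (simp add: node_def)
  finally show ?thesis .
qed

lemma fcoef_fexp_minus_recon: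
  "fcoef (\<lambda>x. fexp k x - recon N \<phi> (fexp k) x) n = alias_coef N \<phi> k n"
  by (simp add: fcoef_diff continuous_intros fcoef_fexp fcoef_recon_fexp alias_coef_def)

end

text \<open>Only the frequencies n = k + 2lN carry weight; the term l = 0 is |1 - \<mu>(k)|^2 = |\<nu>(k)|^2.\<close>
lemma has_sum_alias_coef:
  assumes N: "N > 0" and cont: "continuous_on {0..1} \<phi>" and "\<phi> 0 = 1" "\<phi> 1 = 1"
    and summable: "(\<lambda>l. norm (fcoef \<phi> l)) summable_on UNIV"
  shows "((\<lambda>n. (cmod (alias_coef N \<phi> k n))\<^sup>2) has_sum (errterm N \<phi> k)\<^sup>2) UNIV"
proof -
  have endpoints: "\<phi> 0 = \<phi> 1"
    using assms by simp
  define g where "g n = (cmod (alias_coef N \<phi> k n))\<^sup>2" for n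
  define freq where "freq l = k + 2 * l * int N" for l
  have "inj freq"
    unfolding freq_def inj_def using N by auto
  obtain W where "(g has_sum W) UNIV"
    using parseval[of "\<lambda>x. fexp k x - recon N \<phi> (fexp k) x"] N cont endpoints
    unfolding g_def by (auto intro!: continuous_intros simp: recon_endpoints fcoef_fexp_minus_recon)
  moreover have "g n = 0" if "n \<notin> range freq" for n
  proof -
    have "\<not> 2 * int N dvd k - n"
    proof
      assume "2 * int N dvd k - n"
      then obtain m where "k - n = 2 * int N * m" ..
      then have "n = freq (- m)"
        unfolding freq_def by (simp add: algebra_simps)
      then show False
        using that by auto
    qed
    moreover have "n \<noteq> k"
      using that rangeI[of freq 0] by (auto simp: freq_def)
    ultimately show ?thesis
      unfolding g_def alias_coef_def by simp
  qed
  ultimately have "(g has_sum W) (range freq)"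
    using has_sum_cong_neutral[of "range freq" UNIV g g] by auto
  then have reindexed: "((g \<circ> freq) has_sum W) UNIV"
    using has_sum_reindex[OF \<open>inj freq\<close>] by blast
  have "W = infsum (g \<circ> freq) (insert 0 (UNIV - {0}))"
    using infsumI[OF reindexed] by (simp add: insert_absorb)
  also have "\<dots> = (g \<circ> freq) 0 + infsum (g \<circ> freq) (UNIV - {0})"
    using summable_on_subset_banach[OF has_sum_imp_summable[OF reindexed]]
    by (intro infsum_insert) auto
  also have "(g \<circ> freq) 0 = (cmod (nu N \<phi> k))\<^sup>2"
    by (simp add: g_def freq_def alias_coef_def nu_eq_1_minus_mu[OF assms(2-5)])
  also have "infsum (g \<circ> freq) (UNIV - {0})
      = infsum (\<lambda>l. (cmod (mu N \<phi> (k + 2 * l * int N)))\<^sup>2) (UNIV - {0})"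
    using N by (intro infsum_cong) (auto simp: g_def freq_def alias_coef_def)
  finally have "W = (errterm N \<phi> k)\<^sup>2"
    unfolding errterm_def by (subst real_sqrt_pow2) (auto intro!: add_nonneg_nonneg infsum_nonneg)
  with \<open>(g has_sum W) UNIV\<close> show ?thesis
    unfolding g_def by simp
qed

lemma alias_coef_disjoint:
  assumes "k \<in> BN mm" "k' \<in> BN mm" "mm \<le> N" "k \<noteq> k'"
  shows "alias_coef N \<phi> k n = 0 \<or> alias_coef N \<phi> k' n = 0"
proof (rule ccontr)
  have dvd: "2 * int N dvd j - n" if "alias_coef N \<phi> j n \<noteq> 0" for j
    using that unfolding alias_coef_def by (cases "n = j") (auto split: if_splits)
  assume "\<not> ?thesis"
  then have "2 * int N dvd k - n" "2 * int N dvd k' - n"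
    using dvd by auto
  then have "2 * int N dvd (k - n) - (k' - n)"
    by (rule dvd_diff)
  then have "\<bar>2 * int N\<bar> \<le> \<bar>k - k'\<bar>"
    using assms(4) by (intro dvd_imp_le_int) auto
  moreover have "\<bar>k - k'\<bar> < 2 * int mm"
    using assms(1,2) unfolding BN_def by auto
  ultimately show False
    using assms(3) by linarith
qed

lemma has_sum_sum:
  fixes f :: "'i \<Rightarrow> 'a \<Rightarrow> 'b::topological_comm_monoid_add"
  assumes "finite I" "\<And>i. i \<in> I \<Longrightarrow> (f i has_sum s i) A"
  shows "((\<lambda>x. \<Sum>i\<in>I. f i x) has_sum (\<Sum>i\<in>I. s i)) A"
  using assms by (induction I rule: finite_induct) (auto intro: has_sum_add)

lemma norm_sq_sum_disjoint:
  fixes a :: "'a \<Rightarrow> complex"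
  assumes K: "finite K" and disjoint: "\<And>k k'. k \<in> K \<Longrightarrow> k' \<in> K \<Longrightarrow> k \<noteq> k' \<Longrightarrow> a k = 0 \<or> a k' = 0"
  shows "(cmod (sum a K))\<^sup>2 = (\<Sum>k\<in>K. (cmod (a k))\<^sup>2)"
proof (cases "\<exists>k0\<in>K. a k0 \<noteq> 0")
  case True
  then obtain k0 where k0: "k0 \<in> K" "a k0 \<noteq> 0"
    by blast
  then have "a k = 0" if "k \<in> K - {k0}" for k
    using disjoint[of k0 k] that by auto
  then show ?thesis
    using sum.remove[OF K k0(1), of a] sum.remove[OF K k0(1), of "\<lambda>k. (cmod (a k))\<^sup>2"] by simp
qed simp

lemma integral_norm_sq_eq_sum_fcoef:
  assumes h: "continuous_on {0..1} h" and h01: "h 0 = h 1"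
    and K: "finite K" and vanish: "\<And>k. k \<notin> K \<Longrightarrow> fcoef h k = 0"
  shows "integral {0..1} (\<lambda>x. (cmod (h x))\<^sup>2) = (\<Sum>k\<in>K. (cmod (fcoef h k))\<^sup>2)"
proof -
  have "((\<lambda>k. (cmod (fcoef h k))\<^sup>2) has_sum integral {0..1} (\<lambda>x. (cmod (h x))\<^sup>2)) UNIV
      \<longleftrightarrow> ((\<lambda>k. (cmod (fcoef h k))\<^sup>2) has_sum integral {0..1} (\<lambda>x. (cmod (h x))\<^sup>2)) K"
    by (rule has_sum_cong_neutral) (auto simp: vanish)
  then have "((\<lambda>k. (cmod (fcoef h k))\<^sup>2) has_sum integral {0..1} (\<lambda>x. (cmod (h x))\<^sup>2)) K"
    using parseval[OF h h01] by simp
  then show ?thesis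
    using has_sum_finite[OF K] has_sum_unique by blast
qed

lemma integral_norm_sq_recon_error:
  assumes N: "mm \<le> N" "N > 0" and cont: "continuous_on {0..1} \<phi>" and "\<phi> 0 = 1" "\<phi> 1 = 1"
    and summable: "(\<lambda>l. norm (fcoef \<phi> l)) summable_on UNIV"
    and u: "continuous_on {0..1} u" "u 0 = u 1" and vanish: "\<And>k. k \<notin> BN mm \<Longrightarrow> fcoef u k = 0"
  shows "integral {0..1} (\<lambda>x. (cmod (u x - recon N \<phi> u x))\<^sup>2)
    = (\<Sum>k\<in>BN mm. (cmod (fcoef u k))\<^sup>2 * (errterm N \<phi> k)\<^sup>2)"
proof -
  have endpoints: "\<phi> 0 = \<phi> 1"
    using assms by simp
  define E where "E x = u x - recon N \<phi> u x" for x
  let ?c = "fcoef u"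
  have u_expansion: "u x = trig_sum ?c (BN mm) x" if "x \<in> {0..1}" for x
    using eq_trig_sum_fcoef[OF u _ vanish that] by simp
  have "recon N \<phi> u x = (\<Sum>k\<in>BN mm. ?c k * recon N \<phi> (fexp k) x)" for x
    unfolding recon_sum[symmetric] trig_sum_def[symmetric]
    by (intro recon_cong_nodes u_expansion node_in_01)
  then have E_expansion: "E x = (\<Sum>k\<in>BN mm. ?c k * (fexp k x - recon N \<phi> (fexp k) x))"
    if "x \<in> {0..1}" for x
    using u_expansion[OF that]
    by (simp add: E_def trig_sum_def right_diff_distrib sum_subtractf)
  have fcoef_E: "fcoef E n = (\<Sum>k\<in>BN mm. ?c k * alias_coef N \<phi> k n)" for n
  proof -
    have "fcoef E n = fcoef (\<lambda>x. \<Sum>k\<in>BN mm. ?c k * (fexp k x - recon N \<phi> (fexp k) x)) n"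
      by (rule fcoef_cong[OF E_expansion])
    also have "\<dots> = (\<Sum>k\<in>BN mm. ?c k * fcoef (\<lambda>x. fexp k x - recon N \<phi> (fexp k) x) n)"
      using N cont endpoints by (subst fcoef_sum) (auto intro!: continuous_intros simp: fcoef_cmult)
    finally show ?thesis
      using N cont endpoints by (simp add: fcoef_fexp_minus_recon)
  qed
  have "(cmod (fcoef E n))\<^sup>2 = (\<Sum>k\<in>BN mm. (cmod (?c k))\<^sup>2 * (cmod (alias_coef N \<phi> k n))\<^sup>2)" for n
    unfolding fcoef_E
    by (subst norm_sq_sum_disjoint)
      (auto dest: alias_coef_disjoint[OF _ _ N(1)] simp: norm_mult power_mult_distrib)
  then have "((\<lambda>n. (cmod (fcoef E n))\<^sup>2)
      has_sum (\<Sum>k\<in>BN mm. (cmod (?c k))\<^sup>2 * (errterm N \<phi> k)\<^sup>2)) UNIV"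
    using has_sum_alias_coef[OF N(2) assms(3-6)]
    by (simp only:) (intro has_sum_sum has_sum_cmult_right finite_BN)
  moreover have "((\<lambda>n. (cmod (fcoef E n))\<^sup>2) has_sum integral {0..1} (\<lambda>x. (cmod (E x))\<^sup>2)) UNIV"
    using N cont endpoints u unfolding E_def
    by (intro parseval) (auto intro!: continuous_intros simp: recon_endpoints)
  ultimately show ?thesis
    unfolding E_def using has_sum_unique by blast
qed

section \<open>The error bounds\<close>

lemma power2_norm_vec: "(norm (v :: complex ^ 'n))\<^sup>2 = (\<Sum>i\<in>UNIV. (cmod (v $ i))\<^sup>2)"
  unfolding norm_vec_def L2_set_def by (simp add: sum_nonneg)

lemma L2norm_eq_sqrt_sum_components:
  fixes f :: "real \<Rightarrow> complex ^ 'm"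
  assumes "\<And>i. continuous_on {0..1} (\<lambda>x. f x $ i)"
  shows "L2norm f = sqrt (\<Sum>i\<in>UNIV. integral {0..1} (\<lambda>x. (cmod (f x $ i))\<^sup>2))"
  unfolding L2norm_def power2_norm_vec
  by (subst integral_sum) (auto intro!: integrable_continuous_interval continuous_intros assms)

lemma bandlimited_component:
  assumes "bandlimited mm f"
  shows "continuous_on S (\<lambda>x. f x $ i)" "f 0 $ i = f 1 $ i"
    and "k \<notin> BN mm \<Longrightarrow> fcoef (\<lambda>x. f x $ i) k = 0"
  using assms unfolding bandlimited_def vfcoef_def
  by (auto intro!: continuous_on_component continuous_on_subset[of UNIV f] dest: spec[of _ 0])
    (metis vec_lambda_beta zero_index)

lemma L2norm_bandlimited:
  assumes f: "bandlimited mm f"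
  shows "L2norm f = sqrt (\<Sum>k\<in>BN mm. (norm (vfcoef f k))\<^sup>2)"
proof -
  have "L2norm f = sqrt (\<Sum>i\<in>UNIV. integral {0..1} (\<lambda>x. (cmod (f x $ i))\<^sup>2))"
    by (intro L2norm_eq_sqrt_sum_components bandlimited_component[OF f])
  also have "\<dots> = sqrt (\<Sum>i\<in>UNIV. \<Sum>k\<in>BN mm. (cmod (fcoef (\<lambda>x. f x $ i) k))\<^sup>2)"
    by (intro arg_cong[where f = sqrt] sum.cong refl integral_norm_sq_eq_sum_fcoef
        bandlimited_component[OF f] finite_BN)
  also have "\<dots> = sqrt (\<Sum>k\<in>BN mm. (norm (vfcoef f k))\<^sup>2)"
    by (subst sum.swap) (simp add: power2_norm_vec vfcoef_def)
  finally show ?thesis .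
qed

lemma L2norm_recon_error:
  assumes "mm \<le> N" "N > 0" "continuous_on {0..1} \<phi>" "\<phi> 0 = 1" "\<phi> 1 = 1"
    and "(\<lambda>l. norm (fcoef \<phi> l)) summable_on UNIV" and f: "bandlimited mm f"
  shows "L2norm (\<lambda>x. f x - Rphi N \<phi> f x)
    = sqrt (\<Sum>k\<in>BN mm. (norm (vfcoef f k))\<^sup>2 * (errterm N \<phi> k)\<^sup>2)"
proof -
  have endpoints: "\<phi> 0 = \<phi> 1"
    using assms by simp
  have "L2norm (\<lambda>x. f x - Rphi N \<phi> f x)
      = sqrt (\<Sum>i\<in>UNIV. integral {0..1} (\<lambda>x. (cmod (f x $ i - recon N \<phi> (\<lambda>y. f y $ i) x))\<^sup>2))"
    using bandlimited_component[OF f] assms(2,3) endpoints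
    by (simp add: L2norm_eq_sqrt_sum_components Rphi_component continuous_intros)
  also have "\<dots> = sqrt (\<Sum>i\<in>UNIV. \<Sum>k\<in>BN mm. (cmod (fcoef (\<lambda>x. f x $ i) k))\<^sup>2 * (errterm N \<phi> k)\<^sup>2)"
    using bandlimited_component[OF f] by (simp add: integral_norm_sq_recon_error[OF assms(1-6)])
  also have "\<dots> = sqrt (\<Sum>k\<in>BN mm. (norm (vfcoef f k))\<^sup>2 * (errterm N \<phi> k)\<^sup>2)"
    by (subst sum.swap) (simp add: power2_norm_vec vfcoef_def sum_distrib_right)
  finally show ?thesis .
qed

lemma sqrt_weighted_sum_bounds:
  fixes w t :: "'a \<Rightarrow> real"
  assumes B: "finite B" "B \<noteq> {}" and w: "\<And>k. k \<in> B \<Longrightarrow> 0 \<le> w k" and t: "\<And>k. k \<in> B \<Longrightarrow> 0 \<le> t k"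
  shows "Min (t ` B) * sqrt (\<Sum>k\<in>B. w k) \<le> sqrt (\<Sum>k\<in>B. w k * (t k)\<^sup>2)"
    and "sqrt (\<Sum>k\<in>B. w k * (t k)\<^sup>2) \<le> Max (t ` B) * sqrt (\<Sum>k\<in>B. w k)"
proof -
  let ?m = "Min (t ` B)" and ?M = "Max (t ` B)"
  have m: "0 \<le> ?m" "?m \<le> t k" and M: "0 \<le> ?M" "t k \<le> ?M" if "k \<in> B" for k
    using B t that by (auto simp: Min_le_iff Max_ge_iff)
  obtain k0 where "k0 \<in> B"
    using B by blast
  have "?m * sqrt (\<Sum>k\<in>B. w k) = sqrt (\<Sum>k\<in>B. ?m\<^sup>2 * w k)"
    using m(1)[OF \<open>k0 \<in> B\<close>] unfolding sum_distrib_left[symmetric] real_sqrt_mult by simp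
  also have "\<dots> \<le> sqrt (\<Sum>k\<in>B. w k * (t k)\<^sup>2)"
    using m w by (intro real_sqrt_le_mono sum_mono) (simp add: mult.commute mult_left_mono power_mono)
  finally show "?m * sqrt (\<Sum>k\<in>B. w k) \<le> sqrt (\<Sum>k\<in>B. w k * (t k)\<^sup>2)" .
  have "sqrt (\<Sum>k\<in>B. w k * (t k)\<^sup>2) \<le> sqrt (\<Sum>k\<in>B. ?M\<^sup>2 * w k)"
    using M t w by (intro real_sqrt_le_mono sum_mono) (simp add: mult.commute mult_left_mono power_mono)
  also have "\<dots> = ?M * sqrt (\<Sum>k\<in>B. w k)"
    using M(1)[OF \<open>k0 \<in> B\<close>] unfolding sum_distrib_left[symmetric] real_sqrt_mult by simp
  finally show "sqrt (\<Sum>k\<in>B. w k * (t k)\<^sup>2) \<le> ?M * sqrt (\<Sum>k\<in>B. w k)" .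
qed

theorem lemma4p2:
  fixes \<phi> :: "real \<Rightarrow> complex" and f :: "real \<Rightarrow> complex ^ 'm"
    and mm N :: nat
  assumes "continuous_on {0..1} \<phi>" and "\<phi> 0 = 1" and "\<phi> 1 = 1"
    and "(\<lambda>l. norm (fcoef \<phi> l)) summable_on UNIV"
    and "mm \<ge> 1" and "N \<ge> mm"
    and "bandlimited mm f"
  shows "eps1 mm N \<phi> * L2norm f \<le> L2norm (\<lambda>x. f x - Rphi N \<phi> f x)
       \<and> L2norm (\<lambda>x. f x - Rphi N \<phi> f x) \<le> eps2 mm N \<phi> * L2norm f"
proof -
  have "BN mm \<noteq> {}"
    using assms(5) unfolding BN_def by auto
  moreover have "0 \<le> errterm N \<phi> k" for k
    unfolding errterm_def by (auto intro!: add_nonneg_nonneg infsum_nonneg)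
  moreover have "L2norm (\<lambda>x. f x - Rphi N \<phi> f x)
      = sqrt (\<Sum>k\<in>BN mm. (norm (vfcoef f k))\<^sup>2 * (errterm N \<phi> k)\<^sup>2)"
    using assms by (intro L2norm_recon_error) auto
  ultimately show ?thesis
    unfolding eps1_def eps2_def L2norm_bandlimited[OF assms(7)]
    using sqrt_weighted_sum_bounds[of "BN mm" "\<lambda>k. (norm (vfcoef f k))\<^sup>2" "errterm N \<phi>"] by auto
qed

end
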